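(* There exists a $\mathbb{C}$-algebra isomorphism $\eta_1:\hat H_{q^{-1}}\to\hat H_q$ such that $$t_0\mapsto t_0^{-1},\qquad t_1\mapsto t_0t_1^{-1}t_0^{-1},\qquad t_2\mapsto t_3^{-1}t_2^{-1}t_3,\qquad t_3\mapsto t_3^{-1}.$$ Moreover $\eta_1^2=1$, i.e. composing $\eta_1$ with the map $\hat H_q\to\hat H_{q^{-1}}$ given by the same formulas yields the identity.
   Context: $q\in\mathbb{C}^*$ is not a root of unity and a square root $q^{1/2}$ is fixed; $q^{-1/2}=(q^{1/2})^{-1}$ is used as the square root of $q^{-1}$. For $p\in\{q,q^{-1}\}$, the universal double affine Hecke algebra $\hat H_p$ of type $(C_1^\vee,C_1)$ is the $\mathbb{C}$-algebra with generators $t_n^{\pm1}$ $(n=0,1,2,3)$ and relations: $t_nt_n^{-1}=t_n^{-1}t_n=1$; $t_n+t_n^{-1}$ is central; $t_0t_1t_2t_3=p^{-1/2}$ (so $t_0t_1t_2t_3=q^{-1/2}$ in $\hat H_q$ and $t_0t_1t_2t_3=q^{1/2}$ in $\hat H_{q^{-1}}$). *)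

theory Defs
  imports Complex_Main
begin

text \<open>Universal double affine Hecke algebra of type (C1v,C1), presented by generators
and relations.  We build the free associative unital complex algebra on the eight letters
t_n and t_n^{-1} (n = 0..3) as finitely supported functions on words (with concatenation
convolution), take the quotient by the two-sided ideal generated by the defining relations,
and use the set of equivalence classes with the induced operations.\<close>

datatype idx = I0 | I1 | I2 | I3

text \<open>Gen n True stands for the generator t_n, Gen n False for the generator t_n^{-1}.\<close>
datatype letter = Gen idx bool

abbreviation t :: "idx \<Rightarrow> letter" where "t n \<equiv> Gen n True"
abbreviation ti :: "idx \<Rightarrow> letter" where "ti n \<equiv> Gen n False"

type_synonym fa = "letter list \<Rightarrow> complex"

definition fa_carrier :: "fa set" where
  "fa_carrier = {f. finite {w. f w \<noteq> 0}}"

definition fa_zero :: fa where "fa_zero = (\<lambda>w. 0)"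
definition fa_add :: "fa \<Rightarrow> fa \<Rightarrow> fa" where "fa_add f g = (\<lambda>w. f w + g w)"
definition fa_smul :: "complex \<Rightarrow> fa \<Rightarrow> fa" where "fa_smul c f = (\<lambda>w. c * f w)"
definition fa_sub :: "fa \<Rightarrow> fa \<Rightarrow> fa" where "fa_sub f g = fa_add f (fa_smul (-1) g)"
definition fa_mul :: "fa \<Rightarrow> fa \<Rightarrow> fa" where
  "fa_mul f g = (\<lambda>w. \<Sum>i\<le>length w. f (take i w) * g (drop i w))"
definition fa_word :: "letter list \<Rightarrow> fa" where
  "fa_word u = (\<lambda>w. if w = u then 1 else 0)"
definition fa_one :: fa where "fa_one = fa_word []"

definition fa_ideal :: "fa set \<Rightarrow> bool" where
  "fa_ideal I \<longleftrightarrow> I \<subseteq> fa_carrier \<and> fa_zero \<in> I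
     \<and> (\<forall>f\<in>I. \<forall>g\<in>I. fa_add f g \<in> I)
     \<and> (\<forall>c f. f \<in> I \<longrightarrow> fa_smul c f \<in> I)
     \<and> (\<forall>f\<in>I. \<forall>g\<in>fa_carrier. fa_mul f g \<in> I \<and> fa_mul g f \<in> I)"

definition ideal_gen :: "fa set \<Rightarrow> fa set" where
  "ideal_gen R = \<Inter>{I. fa_ideal I \<and> R \<subseteq> I}"

text \<open>Defining relations; the parameter c is the value of t0 t1 t2 t3
(c = p^{-1/2}).  Centrality of t_n + t_n^{-1} is imposed by commutation with every
generator letter.\<close>
definition daha_rels :: "complex \<Rightarrow> fa set" where
  "daha_rels c =
     {fa_sub (fa_word [t n, ti n]) fa_one | n. True}
   \<union> {fa_sub (fa_word [ti n, t n]) fa_one | n. True}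
   \<union> {fa_sub (fa_mul (fa_add (fa_word [t n]) (fa_word [ti n])) (fa_word [x]))
             (fa_mul (fa_word [x]) (fa_add (fa_word [t n]) (fa_word [ti n]))) | n x. True}
   \<union> {fa_sub (fa_word [t I0, t I1, t I2, t I3]) (fa_smul c fa_one)}"

definition daha_ideal :: "complex \<Rightarrow> fa set" where
  "daha_ideal c = ideal_gen (daha_rels c)"

definition daha_cls :: "complex \<Rightarrow> fa \<Rightarrow> fa set" where
  "daha_cls c f = {g \<in> fa_carrier. fa_sub f g \<in> daha_ideal c}"

definition daha :: "complex \<Rightarrow> fa set set" where
  "daha c = daha_cls c ` fa_carrier"

definition daha_add :: "complex \<Rightarrow> fa set \<Rightarrow> fa set \<Rightarrow> fa set" where
  "daha_add c X Y = daha_cls c (fa_add (SOME f. f \<in> X) (SOME g. g \<in> Y))"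
definition daha_smul :: "complex \<Rightarrow> complex \<Rightarrow> fa set \<Rightarrow> fa set" where
  "daha_smul c a X = daha_cls c (fa_smul a (SOME f. f \<in> X))"
definition daha_mul :: "complex \<Rightarrow> fa set \<Rightarrow> fa set \<Rightarrow> fa set" where
  "daha_mul c X Y = daha_cls c (fa_mul (SOME f. f \<in> X) (SOME g. g \<in> Y))"
definition daha_one :: "complex \<Rightarrow> fa set" where
  "daha_one c = daha_cls c fa_one"
definition daha_gen :: "complex \<Rightarrow> letter list \<Rightarrow> fa set" where
  "daha_gen c u = daha_cls c (fa_word u)"

definition daha_alg_hom :: "complex \<Rightarrow> complex \<Rightarrow> (fa set \<Rightarrow> fa set) \<Rightarrow> bool" where
  "daha_alg_hom c d \<phi> \<longleftrightarrow>
     (\<forall>X\<in>daha c. \<phi> X \<in> daha d)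
   \<and> (\<forall>X\<in>daha c. \<forall>Y\<in>daha c. \<phi> (daha_add c X Y) = daha_add d (\<phi> X) (\<phi> Y))
   \<and> (\<forall>a. \<forall>X\<in>daha c. \<phi> (daha_smul c a X) = daha_smul d a (\<phi> X))
   \<and> (\<forall>X\<in>daha c. \<forall>Y\<in>daha c. \<phi> (daha_mul c X Y) = daha_mul d (\<phi> X) (\<phi> Y))
   \<and> \<phi> (daha_one c) = daha_one d"

definition daha_alg_iso :: "complex \<Rightarrow> complex \<Rightarrow> (fa set \<Rightarrow> fa set) \<Rightarrow> bool" where
  "daha_alg_iso c d \<phi> \<longleftrightarrow> daha_alg_hom c d \<phi> \<and> bij_betw \<phi> (daha c) (daha d)"

definition eta1_gens :: "complex \<Rightarrow> complex \<Rightarrow> (fa set \<Rightarrow> fa set) \<Rightarrow> bool" where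
  "eta1_gens c d \<phi> \<longleftrightarrow>
     \<phi> (daha_gen c [t I0]) = daha_gen d [ti I0]
   \<and> \<phi> (daha_gen c [t I1]) = daha_gen d [t I0, ti I1, ti I0]
   \<and> \<phi> (daha_gen c [t I2]) = daha_gen d [ti I3, ti I2, t I3]
   \<and> \<phi> (daha_gen c [t I3]) = daha_gen d [ti I3]"

end

theory Submission
  imports Defs
begin

text \<open>A substitution of words for letters induces an endomorphism of the free algebra, and
it descends to the quotients as soon as every defining relation is sent into the ideal.
For the substitution of eta_1 this is checked relation by relation: the images of t_n and
t_n^{-1} are mutually inverse words, they are the conjugates of t_m^{-1} and t_m by one and the
same word, so t_n + t_n^{-1} goes to a conjugate of the central element t_m + t_m^{-1}; and
t0 t1 t2 t3 goes, after free cancellation, to the inverse of t2 t3 t0 t1, a cyclic rotation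
of t0 t1 t2 t3, hence to the inverse of the parameter.  Substituting twice returns every
letter up to free cancellation, so the two induced maps are mutually inverse.\<close>

section \<open>The free algebra\<close>

lemma finite_UNIV_letter: "finite (UNIV :: letter set)"
proof -
  have "x \<in> range (Gen I0) \<union> range (Gen I1) \<union> range (Gen I2) \<union> range (Gen I3)" for x
  proof (cases x)
    case (Gen n b)
    then show ?thesis by (cases n) auto
  qed
  then have univ: "UNIV = range (Gen I0) \<union> range (Gen I1) \<union> range (Gen I2) \<union> range (Gen I3)"
    by blast
  show ?thesis by (subst univ) simp
qed

lemma fa_mul_word: "fa_mul (fa_word u) (fa_word v) = fa_word (u @ v)"
proof
  fix w
  have "fa_mul (fa_word u) (fa_word v) w
      = (\<Sum>i\<le>length w. if i = length u then (if w = u @ v then 1 else 0) else 0)"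
    unfolding fa_mul_def fa_word_def
  proof (rule sum.cong[OF refl])
    fix i assume "i \<in> {..length w}"
    then have "i \<le> length w" by simp
    show "(if take i w = u then 1 else 0) * (if drop i w = v then 1 else 0)
             = (if i = length u then (if w = u @ v then 1 else 0) else (0::complex))"
    proof (cases "i = length u")
      case True
      then have "w = u @ v \<longleftrightarrow> take i w = u \<and> drop i w = v"
        using append_eq_conv_conj[of u v w] by metis
      then show ?thesis using True by simp
    next
      case False
      then have "take i w \<noteq> u" using \<open>i \<le> length w\<close> by (metis length_take min.absorb2)
      then show ?thesis using False by simp
    qed
  qed
  also have "\<dots> = fa_word (u @ v) w" by (simp add: fa_word_def)
  finally show "fa_mul (fa_word u) (fa_word v) w = fa_word (u @ v) w" .
qed

lemma fa_add_commute: "fa_add f g = fa_add g f"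
  by (auto simp: fa_add_def)
lemma fa_mul_add_left: "fa_mul (fa_add f g) h = fa_add (fa_mul f h) (fa_mul g h)"
  by (auto simp: fa_mul_def fa_add_def sum.distrib ring_distribs)
lemma fa_mul_add_right: "fa_mul h (fa_add f g) = fa_add (fa_mul h f) (fa_mul h g)"
  by (auto simp: fa_mul_def fa_add_def sum.distrib ring_distribs)
lemma fa_mul_smul_left: "fa_mul (fa_smul c f) g = fa_smul c (fa_mul f g)"
  by (auto simp: fa_mul_def fa_smul_def sum_distrib_left mult.assoc)
lemma fa_mul_smul_right: "fa_mul g (fa_smul c f) = fa_smul c (fa_mul g f)"
  by (auto simp: fa_mul_def fa_smul_def sum_distrib_left algebra_simps)
lemma fa_mul_zero_left: "fa_mul fa_zero g = fa_zero"
  by (auto simp: fa_mul_def fa_zero_def)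
lemma fa_mul_zero_right: "fa_mul g fa_zero = fa_zero"
  by (auto simp: fa_mul_def fa_zero_def)
lemma fa_mul_sub_left: "fa_mul (fa_sub f g) h = fa_sub (fa_mul f h) (fa_mul g h)"
  by (simp add: fa_sub_def fa_mul_add_left fa_mul_smul_left)
lemma fa_mul_sub_right: "fa_mul h (fa_sub f g) = fa_sub (fa_mul h f) (fa_mul h g)"
  by (simp add: fa_sub_def fa_mul_add_right fa_mul_smul_right)

lemmas fa_mul_linear =
  fa_mul_add_left fa_mul_add_right fa_mul_smul_left fa_mul_smul_right
  fa_mul_zero_left fa_mul_zero_right

lemma fa_carrier_zero: "fa_zero \<in> fa_carrier"
  by (simp add: fa_carrier_def fa_zero_def)
lemma fa_carrier_word: "fa_word u \<in> fa_carrier"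
  by (simp add: fa_carrier_def fa_word_def)

lemma fa_carrier_add:
  assumes "f \<in> fa_carrier" "g \<in> fa_carrier"
  shows "fa_add f g \<in> fa_carrier"
proof -
  have "{w. fa_add f g w \<noteq> 0} \<subseteq> {w. f w \<noteq> 0} \<union> {w. g w \<noteq> 0}"
    by (auto simp: fa_add_def)
  then show ?thesis using assms unfolding fa_carrier_def by (auto elim: finite_subset)
qed

lemma fa_carrier_smul: "f \<in> fa_carrier \<Longrightarrow> fa_smul c f \<in> fa_carrier"
  unfolding fa_carrier_def fa_smul_def by (auto elim: rev_finite_subset)

lemma fa_carrier_sub: "f \<in> fa_carrier \<Longrightarrow> g \<in> fa_carrier \<Longrightarrow> fa_sub f g \<in> fa_carrier"
  by (simp add: fa_sub_def fa_carrier_add fa_carrier_smul)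

lemma fa_carrier_mul:
  assumes "f \<in> fa_carrier" "g \<in> fa_carrier"
  shows "fa_mul f g \<in> fa_carrier"
proof -
  let ?S = "(\<lambda>(a, b). a @ b) ` ({w. f w \<noteq> 0} \<times> {w. g w \<noteq> 0})"
  have "{w. fa_mul f g w \<noteq> 0} \<subseteq> ?S"
  proof
    fix w assume "w \<in> {w. fa_mul f g w \<noteq> 0}"
    then obtain i where "f (take i w) * g (drop i w) \<noteq> 0"
      unfolding fa_mul_def by (auto elim: sum.not_neutral_contains_not_neutral)
    then show "w \<in> ?S" by (auto intro!: image_eqI[of _ _ "(take i w, drop i w)"])
  qed
  moreover have "finite ?S"
    using assms unfolding fa_carrier_def by auto
  ultimately show ?thesis unfolding fa_carrier_def by (auto elim: finite_subset)
qed

lemmas fa_carrier_closed =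
  fa_carrier_zero fa_carrier_word fa_carrier_add fa_carrier_smul fa_carrier_sub fa_carrier_mul

lemma fa_carrier_induct[consumes 1, case_names zero step]:
  assumes "f \<in> fa_carrier" "P fa_zero"
    and step: "\<And>c w g. g \<in> fa_carrier \<Longrightarrow> P g \<Longrightarrow> P (fa_add (fa_smul c (fa_word w)) g)"
  shows "P f"
proof -
  have "\<forall>f. {w. f w \<noteq> 0} \<subseteq> S \<longrightarrow> P f" if "finite S" for S
    using that
  proof (induction S rule: finite_induct)
    case empty
    have "f = fa_zero" if "{w. f w \<noteq> 0} \<subseteq> {}" for f :: fa
      using that unfolding fa_zero_def by blast
    then show ?case using assms(2) by blast
  next
    case (insert x S)
    show ?case
    proof (intro allI impI)
      fix f :: fa assume supp: "{w. f w \<noteq> 0} \<subseteq> insert x S"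
      let ?g = "f(x := 0)"
      have "{w. ?g w \<noteq> 0} \<subseteq> S" using supp by auto
      then have "?g \<in> fa_carrier" "P ?g"
        using insert.IH finite_subset[OF _ insert.hyps(1)] by (auto simp: fa_carrier_def)
      moreover have "f = fa_add (fa_smul (f x) (fa_word x)) ?g"
        by (auto simp: fa_add_def fa_smul_def fa_word_def)
      ultimately show "P f" using step by metis
    qed
  qed
  then show ?thesis using assms(1) unfolding fa_carrier_def by blast
qed

lemma fa_mul_Nil_left: "f \<in> fa_carrier \<Longrightarrow> fa_mul (fa_word []) f = f"
  by (induction rule: fa_carrier_induct) (simp_all add: fa_mul_linear fa_mul_word)

lemma fa_mul_assoc_words:
  "h \<in> fa_carrier \<Longrightarrow> fa_mul (fa_word (u @ v)) h = fa_mul (fa_word u) (fa_mul (fa_word v) h)"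
  by (induction rule: fa_carrier_induct) (simp_all add: fa_mul_linear fa_mul_word)

lemma fa_mul_assoc_word:
  assumes "g \<in> fa_carrier" "h \<in> fa_carrier"
  shows "fa_mul (fa_mul (fa_word u) g) h = fa_mul (fa_word u) (fa_mul g h)"
  using assms(1)
  by (induction rule: fa_carrier_induct)
     (simp_all add: fa_mul_linear fa_mul_word fa_mul_assoc_words[OF assms(2)])

lemma fa_mul_assoc:
  assumes "f \<in> fa_carrier" "g \<in> fa_carrier" "h \<in> fa_carrier"
  shows "fa_mul (fa_mul f g) h = fa_mul f (fa_mul g h)"
  using assms(1)
  by (induction rule: fa_carrier_induct)
     (simp_all add: fa_mul_linear fa_mul_assoc_word[OF assms(2,3)])

section \<open>The defining ideal and the congruence modulo it\<close>

lemma fa_ideal_carrier: "fa_ideal fa_carrier"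
  unfolding fa_ideal_def by (auto simp: fa_carrier_closed)

lemma daha_rels_carrier: "daha_rels c \<subseteq> fa_carrier"
  unfolding daha_rels_def fa_one_def by (auto intro!: fa_carrier_closed)

lemma fa_ideal_ideal_gen: "R \<subseteq> fa_carrier \<Longrightarrow> fa_ideal (ideal_gen R)"
  using fa_ideal_carrier unfolding ideal_gen_def fa_ideal_def by auto

lemma fa_ideal_daha_ideal: "fa_ideal (daha_ideal c)"
  unfolding daha_ideal_def by (rule fa_ideal_ideal_gen[OF daha_rels_carrier])

lemma daha_rels_in_ideal: "r \<in> daha_rels c \<Longrightarrow> r \<in> daha_ideal c"
  unfolding daha_ideal_def ideal_gen_def by blast

lemma daha_ideal_least: "fa_ideal J \<Longrightarrow> daha_rels c \<subseteq> J \<Longrightarrow> daha_ideal c \<subseteq> J"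
  unfolding daha_ideal_def ideal_gen_def by blast

lemma
  shows daha_ideal_zero: "fa_zero \<in> daha_ideal c"
    and daha_ideal_add: "f \<in> daha_ideal c \<Longrightarrow> g \<in> daha_ideal c \<Longrightarrow> fa_add f g \<in> daha_ideal c"
    and daha_ideal_smul: "f \<in> daha_ideal c \<Longrightarrow> fa_smul a f \<in> daha_ideal c"
    and daha_ideal_mul_right: "f \<in> daha_ideal c \<Longrightarrow> g \<in> fa_carrier \<Longrightarrow> fa_mul f g \<in> daha_ideal c"
    and daha_ideal_mul_left: "f \<in> daha_ideal c \<Longrightarrow> g \<in> fa_carrier \<Longrightarrow> fa_mul g f \<in> daha_ideal c"
  using fa_ideal_daha_ideal[of c] unfolding fa_ideal_def by blast+

definition daha_eqv :: "complex \<Rightarrow> fa \<Rightarrow> fa \<Rightarrow> bool" where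
  "daha_eqv c f g \<longleftrightarrow> fa_sub f g \<in> daha_ideal c"

lemma daha_eqv_refl: "f \<in> fa_carrier \<Longrightarrow> daha_eqv c f f"
proof -
  have "fa_sub f f = fa_zero" by (auto simp: fa_sub_def fa_add_def fa_smul_def fa_zero_def)
  then show ?thesis by (simp add: daha_eqv_def daha_ideal_zero)
qed

lemma daha_eqv_sym:
  assumes "daha_eqv c f g"
  shows "daha_eqv c g f"
proof -
  have "fa_sub g f = fa_smul (-1) (fa_sub f g)"
    by (auto simp: fa_sub_def fa_add_def fa_smul_def)
  with assms show ?thesis by (simp add: daha_eqv_def daha_ideal_smul)
qed

lemma daha_eqv_trans[trans]:
  assumes "daha_eqv c f g" "daha_eqv c g h"
  shows "daha_eqv c f h"
proof -
  have "fa_sub f h = fa_add (fa_sub f g) (fa_sub g h)"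
    by (auto simp: fa_sub_def fa_add_def fa_smul_def)
  with assms show ?thesis by (simp add: daha_eqv_def daha_ideal_add)
qed

lemma daha_eqv_add:
  assumes "daha_eqv c f f'" "daha_eqv c g g'"
  shows "daha_eqv c (fa_add f g) (fa_add f' g')"
proof -
  have "fa_sub (fa_add f g) (fa_add f' g') = fa_add (fa_sub f f') (fa_sub g g')"
    by (auto simp: fa_sub_def fa_add_def fa_smul_def)
  with assms show ?thesis by (simp add: daha_eqv_def daha_ideal_add)
qed

lemma daha_eqv_smul:
  assumes "daha_eqv c f g"
  shows "daha_eqv c (fa_smul a f) (fa_smul a g)"
proof -
  have "fa_sub (fa_smul a f) (fa_smul a g) = fa_smul a (fa_sub f g)"
    by (auto simp: fa_sub_def fa_add_def fa_smul_def algebra_simps)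
  with assms show ?thesis by (simp add: daha_eqv_def daha_ideal_smul)
qed

lemma daha_eqv_mul_left: "daha_eqv c f g \<Longrightarrow> h \<in> fa_carrier \<Longrightarrow> daha_eqv c (fa_mul h f) (fa_mul h g)"
  by (simp add: daha_eqv_def daha_ideal_mul_left flip: fa_mul_sub_right)

lemma daha_eqv_mul_right: "daha_eqv c f g \<Longrightarrow> h \<in> fa_carrier \<Longrightarrow> daha_eqv c (fa_mul f h) (fa_mul g h)"
  by (simp add: daha_eqv_def daha_ideal_mul_right flip: fa_mul_sub_left)

lemma daha_eqv_mul:
  assumes "daha_eqv c f f'" "daha_eqv c g g'" "g \<in> fa_carrier" "f' \<in> fa_carrier"
  shows "daha_eqv c (fa_mul f g) (fa_mul f' g')"
  using daha_eqv_mul_right[OF assms(1,3)] daha_eqv_mul_left[OF assms(2,4)] by (rule daha_eqv_trans)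

lemma daha_eqv_context:
  "daha_eqv c f g \<Longrightarrow>
   daha_eqv c (fa_mul (fa_word a) (fa_mul f (fa_word b))) (fa_mul (fa_word a) (fa_mul g (fa_word b)))"
  by (intro daha_eqv_mul_left daha_eqv_mul_right fa_carrier_word)

section \<open>The quotient algebra\<close>

lemma daha_cls_eq:
  assumes "f \<in> fa_carrier" "g \<in> fa_carrier"
  shows "daha_cls c f = daha_cls c g \<longleftrightarrow> daha_eqv c f g"
proof
  assume "daha_cls c f = daha_cls c g"
  then have "g \<in> daha_cls c f"
    using assms(2) daha_eqv_refl unfolding daha_cls_def daha_eqv_def by blast
  then show "daha_eqv c f g" by (simp add: daha_cls_def daha_eqv_def)
next
  assume "daha_eqv c f g"
  then show "daha_cls c f = daha_cls c g"
    unfolding daha_cls_def daha_eqv_def[symmetric] by (blast intro: daha_eqv_sym daha_eqv_trans)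
qed

lemma daha_cls_some:
  assumes "f \<in> fa_carrier"
  shows "(SOME g. g \<in> daha_cls c f) \<in> fa_carrier \<and> daha_eqv c f (SOME g. g \<in> daha_cls c f)"
proof -
  have "f \<in> daha_cls c f"
    using assms daha_eqv_refl unfolding daha_cls_def daha_eqv_def by blast
  then have "(SOME g. g \<in> daha_cls c f) \<in> daha_cls c f"
    by (rule someI[where P = "\<lambda>g. g \<in> daha_cls c f"])
  then show ?thesis by (simp add: daha_cls_def daha_eqv_def)
qed

lemma daha_add_cls:
  "f \<in> fa_carrier \<Longrightarrow> g \<in> fa_carrier \<Longrightarrow>
   daha_add c (daha_cls c f) (daha_cls c g) = daha_cls c (fa_add f g)"
  unfolding daha_add_def using daha_cls_some[of f c] daha_cls_some[of g c]
  by (subst daha_cls_eq) (auto intro: fa_carrier_add daha_eqv_add daha_eqv_sym)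

lemma daha_smul_cls:
  "f \<in> fa_carrier \<Longrightarrow> daha_smul c a (daha_cls c f) = daha_cls c (fa_smul a f)"
  unfolding daha_smul_def using daha_cls_some[of f c]
  by (subst daha_cls_eq) (auto intro: fa_carrier_smul daha_eqv_smul daha_eqv_sym)

lemma daha_mul_cls:
  "f \<in> fa_carrier \<Longrightarrow> g \<in> fa_carrier \<Longrightarrow>
   daha_mul c (daha_cls c f) (daha_cls c g) = daha_cls c (fa_mul f g)"
  unfolding daha_mul_def using daha_cls_some[of f c] daha_cls_some[of g c]
  by (subst daha_cls_eq) (auto intro: fa_carrier_mul daha_eqv_mul daha_eqv_sym)

section \<open>Word identities in the quotient\<close>

fun letter_inv :: "letter \<Rightarrow> letter" where
  "letter_inv (Gen n b) = Gen n (\<not> b)"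

definition word_inv :: "letter list \<Rightarrow> letter list" where
  "word_inv w = rev (map letter_inv w)"

lemma letter_inv_letter_inv[simp]: "letter_inv (letter_inv x) = x"
  by (cases x) simp

lemma word_inv_simps[simp]:
  "word_inv [] = []"
  "word_inv (x # w) = word_inv w @ [letter_inv x]"
  "word_inv (u @ v) = word_inv v @ word_inv u"
  "word_inv (word_inv w) = w"
  by (simp_all add: word_inv_def rev_map[symmetric] comp_def)

lemma daha_rels_cases:
  assumes "r \<in> daha_rels c"
  obtains (cancel) x where "r = fa_sub (fa_word [x, letter_inv x]) fa_one"
    | (central) n x where "r = fa_sub (fa_mul (fa_add (fa_word [t n]) (fa_word [ti n])) (fa_word [x]))
        (fa_mul (fa_word [x]) (fa_add (fa_word [t n]) (fa_word [ti n])))"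
    | (prod) "r = fa_sub (fa_word [t I0, t I1, t I2, t I3]) (fa_smul c fa_one)"
proof -
  from assms consider n where "r = fa_sub (fa_word [t n, ti n]) fa_one"
    | n where "r = fa_sub (fa_word [ti n, t n]) fa_one"
    | n x where "r = fa_sub (fa_mul (fa_add (fa_word [t n]) (fa_word [ti n])) (fa_word [x]))
        (fa_mul (fa_word [x]) (fa_add (fa_word [t n]) (fa_word [ti n])))"
    | "r = fa_sub (fa_word [t I0, t I1, t I2, t I3]) (fa_smul c fa_one)"
    unfolding daha_rels_def by blast
  then show thesis
    using cancel[of "t _"] cancel[of "ti _"] central prod by cases auto
qed

lemma daha_eqv_letter_cancel: "daha_eqv c (fa_word [x, letter_inv x]) (fa_word [])"
proof (cases x)
  case (Gen n b)
  then have "fa_sub (fa_word [x, letter_inv x]) fa_one \<in> daha_rels c"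
    unfolding daha_rels_def by (cases b) auto
  then show ?thesis by (simp add: daha_eqv_def fa_one_def daha_rels_in_ideal)
qed

lemma daha_eqv_word_mul_inv: "daha_eqv c (fa_word (u @ word_inv u)) (fa_word [])"
proof (induction u)
  case Nil
  show ?case by (simp add: daha_eqv_refl fa_carrier_word)
next
  case (Cons x u)
  from daha_eqv_context[OF Cons.IH, where a = "[x]" and b = "[letter_inv x]"]
  have "daha_eqv c (fa_word ((x # u) @ word_inv (x # u))) (fa_word [x, letter_inv x])"
    by (simp add: fa_mul_word)
  also have "daha_eqv c \<dots> (fa_word [])" by (rule daha_eqv_letter_cancel)
  finally show ?case .
qed

lemma daha_eqv_word_inv_mul: "daha_eqv c (fa_word (word_inv u @ u)) (fa_word [])"
  using daha_eqv_word_mul_inv[of c "word_inv u"] by simp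

lemma daha_eqv_delete_letter_pair:
  "daha_eqv c (fa_word (a @ x # letter_inv x # b)) (fa_word (a @ b))"
  using daha_eqv_context[OF daha_eqv_letter_cancel, where a = a and b = b]
  by (simp add: fa_mul_word)

lemma daha_eqv_unconj: "daha_eqv c (fa_word (word_inv a @ a @ u @ word_inv a @ a)) (fa_word u)"
proof -
  have "daha_eqv c (fa_word (word_inv a @ a @ u @ word_inv a @ a)) (fa_word (u @ word_inv a @ a))"
    using daha_eqv_context[OF daha_eqv_word_inv_mul[of c a], where a = "[]" and b = "u @ word_inv a @ a"]
    by (simp add: fa_mul_word)
  also have "daha_eqv c \<dots> (fa_word u)"
    using daha_eqv_context[OF daha_eqv_word_inv_mul[of c a], where a = u and b = "[]"]
    by (simp add: fa_mul_word)
  finally show ?thesis .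
qed

lemma daha_eqv_word_rotate:
  assumes "daha_eqv c (fa_word (u @ v)) (fa_smul k (fa_word []))"
  shows "daha_eqv c (fa_word (v @ u)) (fa_smul k (fa_word []))"
proof -
  have "daha_eqv c (fa_word (v @ (u @ v) @ word_inv v)) (fa_word (v @ u))"
    using daha_eqv_context[OF daha_eqv_word_mul_inv[of c v], where a = "v @ u" and b = "[]"]
    by (simp add: fa_mul_word)
  then have "daha_eqv c (fa_word (v @ u)) (fa_word (v @ (u @ v) @ word_inv v))"
    by (rule daha_eqv_sym)
  also have "daha_eqv c \<dots> (fa_smul k (fa_word (v @ word_inv v)))"
    using daha_eqv_context[OF assms, where a = v and b = "word_inv v"]
    by (simp add: fa_mul_word fa_mul_linear)
  also have "daha_eqv c \<dots> (fa_smul k (fa_word []))"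
    by (intro daha_eqv_smul daha_eqv_word_mul_inv)
  finally show ?thesis .
qed

lemma daha_eqv_word_inv_scalar:
  assumes "daha_eqv c (fa_word u) (fa_smul k (fa_word []))" and "k * k' = 1"
  shows "daha_eqv c (fa_word (word_inv u)) (fa_smul k' (fa_word []))"
proof -
  have "daha_eqv c (fa_smul k (fa_word (word_inv u))) (fa_word (word_inv u @ u))"
    using daha_eqv_mul_left[OF daha_eqv_sym[OF assms(1)] fa_carrier_word, of "word_inv u"]
    by (simp add: fa_mul_linear fa_mul_word)
  also have "daha_eqv c \<dots> (fa_word [])"
    by (rule daha_eqv_word_inv_mul)
  finally have "daha_eqv c (fa_smul k' (fa_smul k (fa_word (word_inv u)))) (fa_smul k' (fa_word []))"
    by (rule daha_eqv_smul)
  moreover have "fa_smul k' (fa_smul k (fa_word (word_inv u))) = fa_word (word_inv u)"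
    unfolding fa_smul_def using assms(2) by (simp add: mult.assoc[symmetric] mult.commute[of k'])
  ultimately show ?thesis by simp
qed

lemma daha_eqv_gen_prod: "daha_eqv c (fa_word [t I0, t I1, t I2, t I3]) (fa_smul c (fa_word []))"
proof -
  have "fa_sub (fa_word [t I0, t I1, t I2, t I3]) (fa_smul c fa_one) \<in> daha_rels c"
    unfolding daha_rels_def by blast
  then show ?thesis by (simp add: daha_eqv_def fa_one_def daha_rels_in_ideal)
qed

definition daha_central :: "complex \<Rightarrow> fa \<Rightarrow> bool" where
  "daha_central c f \<longleftrightarrow> f \<in> fa_carrier \<and>
     (\<forall>u. daha_eqv c (fa_mul f (fa_word u)) (fa_mul (fa_word u) f))"

lemma daha_central_gen_sum: "daha_central c (fa_add (fa_word [t n]) (fa_word [ti n]))"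
  unfolding daha_central_def
proof (intro conjI allI)
  let ?s = "fa_add (fa_word [t n]) (fa_word [ti n])"
  have s: "?s \<in> fa_carrier" by (simp add: fa_carrier_closed)
  have letter: "daha_eqv c (fa_mul ?s (fa_word [x])) (fa_mul (fa_word [x]) ?s)" for x
    unfolding daha_eqv_def by (rule daha_rels_in_ideal) (unfold daha_rels_def, blast)
  show "daha_eqv c (fa_mul ?s (fa_word u)) (fa_mul (fa_word u) ?s)" for u
  proof (induction u)
    case Nil
    show ?case by (simp add: fa_mul_Nil_left s daha_eqv_refl fa_mul_linear fa_mul_word)
  next
    case (Cons x u)
    have step: "daha_eqv c (fa_mul (fa_mul ?s (fa_word [x])) (fa_word u))
                           (fa_mul (fa_mul (fa_word [x]) ?s) (fa_word u))"
      by (rule daha_eqv_mul_right[OF letter fa_carrier_word])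
    have IH: "daha_eqv c (fa_mul (fa_word [x]) (fa_mul ?s (fa_word u)))
                         (fa_mul (fa_word [x]) (fa_mul (fa_word u) ?s))"
      by (rule daha_eqv_mul_left[OF Cons.IH fa_carrier_word])
    have split: "fa_mul ?s (fa_word (x # u)) = fa_mul (fa_mul ?s (fa_word [x])) (fa_word u)"
      by (simp add: fa_mul_linear fa_mul_word)
    have assoc: "fa_mul (fa_mul (fa_word [x]) ?s) (fa_word u) = fa_mul (fa_word [x]) (fa_mul ?s (fa_word u))"
      by (rule fa_mul_assoc[OF fa_carrier_word s fa_carrier_word])
    have join: "fa_mul (fa_word [x]) (fa_mul (fa_word u) ?s) = fa_mul (fa_word (x # u)) ?s"
      using fa_mul_assoc_words[OF s, of "[x]" u] by simp
    from daha_eqv_trans[OF step[unfolded assoc] IH] show ?case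
      unfolding split join .
  qed
  show "?s \<in> fa_carrier" by (fact s)
qed

lemma daha_central_eqv:
  assumes "daha_central c f" "daha_eqv c g f" "g \<in> fa_carrier"
  shows "daha_central c g"
  unfolding daha_central_def
proof (intro conjI allI)
  fix u
  have "daha_eqv c (fa_mul g (fa_word u)) (fa_mul f (fa_word u))"
    by (rule daha_eqv_mul_right[OF assms(2) fa_carrier_word])
  also have "daha_eqv c \<dots> (fa_mul (fa_word u) f)"
    using assms(1) unfolding daha_central_def by blast
  also have "daha_eqv c \<dots> (fa_mul (fa_word u) g)"
    by (rule daha_eqv_mul_left[OF daha_eqv_sym[OF assms(2)] fa_carrier_word])
  finally show "daha_eqv c (fa_mul g (fa_word u)) (fa_mul (fa_word u) g)" .
qed (fact assms(3))

lemma daha_central_conj: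
  assumes "daha_central c f"
  shows "daha_central c (fa_mul (fa_word a) (fa_mul f (fa_word (word_inv a))))"
proof (rule daha_central_eqv[OF assms])
  have f: "f \<in> fa_carrier" using assms by (simp add: daha_central_def)
  have "daha_eqv c (fa_mul f (fa_word (word_inv a))) (fa_mul (fa_word (word_inv a)) f)"
    using assms by (simp add: daha_central_def)
  then have "daha_eqv c (fa_mul (fa_word a) (fa_mul f (fa_word (word_inv a))))
                        (fa_mul (fa_word a) (fa_mul (fa_word (word_inv a)) f))"
    by (rule daha_eqv_mul_left[OF _ fa_carrier_word])
  moreover have "daha_eqv c (fa_mul (fa_word (a @ word_inv a)) f) (fa_mul (fa_word []) f)"
    by (rule daha_eqv_mul_right[OF daha_eqv_word_mul_inv f])
  ultimately show "daha_eqv c (fa_mul (fa_word a) (fa_mul f (fa_word (word_inv a)))) f"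
    unfolding fa_mul_assoc_words[OF f] fa_mul_Nil_left[OF f] by (rule daha_eqv_trans)
  show "fa_mul (fa_word a) (fa_mul f (fa_word (word_inv a))) \<in> fa_carrier"
    by (simp add: fa_carrier_closed f)
qed

section \<open>Homomorphisms induced by letter substitutions\<close>

definition word_subst :: "(letter \<Rightarrow> letter list) \<Rightarrow> letter list \<Rightarrow> letter list" where
  "word_subst \<sigma> w = concat (map \<sigma> w)"

lemma word_subst_simps[simp]:
  "word_subst \<sigma> [] = []"
  "word_subst \<sigma> (x # w) = \<sigma> x @ word_subst \<sigma> w"
  "word_subst \<sigma> (u @ v) = word_subst \<sigma> u @ word_subst \<sigma> v"
  by (simp_all add: word_subst_def)

definition fa_subst :: "(letter \<Rightarrow> letter list) \<Rightarrow> fa \<Rightarrow> fa" where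
  "fa_subst \<sigma> f = (\<lambda>v. \<Sum>w \<in> {w. word_subst \<sigma> w = v}. f w)"

text \<open>With an empty image a fibre could be infinite, and the sum in fa_subst would then
silently be 0.\<close>
lemma finite_word_subst_fibre:
  assumes "\<And>x. \<sigma> x \<noteq> []"
  shows "finite {w. word_subst \<sigma> w = v}"
proof -
  have "length w \<le> length (word_subst \<sigma> w)" for w
  proof (induction w)
    case (Cons x w)
    have "0 < length (\<sigma> x)" using assms[of x] by simp
    with Cons show ?case by (simp del: length_greater_0_conv)
  qed simp
  then have "{w. word_subst \<sigma> w = v} \<subseteq> {w. set w \<subseteq> UNIV \<and> length w \<le> length v}"
    by auto
  then show ?thesis
    by (rule finite_subset) (rule finite_lists_length_le[OF finite_UNIV_letter])
qed

lemma fa_subst_word: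
  assumes "\<And>x. \<sigma> x \<noteq> []"
  shows "fa_subst \<sigma> (fa_word u) = fa_word (word_subst \<sigma> u)"
proof
  fix v
  show "fa_subst \<sigma> (fa_word u) v = fa_word (word_subst \<sigma> u) v"
    using sum.delta[OF finite_word_subst_fibre[OF assms, where v = v], of u "\<lambda>_. 1 :: complex"]
    by (simp add: fa_subst_def fa_word_def)
qed

lemma fa_subst_add: "fa_subst \<sigma> (fa_add f g) = fa_add (fa_subst \<sigma> f) (fa_subst \<sigma> g)"
  by (auto simp: fa_subst_def fa_add_def sum.distrib)
lemma fa_subst_smul: "fa_subst \<sigma> (fa_smul c f) = fa_smul c (fa_subst \<sigma> f)"
  by (auto simp: fa_subst_def fa_smul_def sum_distrib_left)
lemma fa_subst_zero: "fa_subst \<sigma> fa_zero = fa_zero"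
  by (auto simp: fa_subst_def fa_zero_def)
lemma fa_subst_sub: "fa_subst \<sigma> (fa_sub f g) = fa_sub (fa_subst \<sigma> f) (fa_subst \<sigma> g)"
  by (simp add: fa_sub_def fa_subst_add fa_subst_smul)

lemmas fa_subst_linear = fa_subst_add fa_subst_smul fa_subst_zero fa_subst_sub

context
  fixes \<sigma> :: "letter \<Rightarrow> letter list"
  assumes nonempty: "\<And>x. \<sigma> x \<noteq> []"
begin

lemma fa_subst_carrier: "f \<in> fa_carrier \<Longrightarrow> fa_subst \<sigma> f \<in> fa_carrier"
  by (induction rule: fa_carrier_induct)
     (simp_all add: fa_subst_linear fa_subst_word[OF nonempty] fa_carrier_closed)

lemma fa_subst_mul_word:
  "g \<in> fa_carrier \<Longrightarrow> fa_subst \<sigma> (fa_mul (fa_word u) g) = fa_mul (fa_subst \<sigma> (fa_word u)) (fa_subst \<sigma> g)"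
  by (induction rule: fa_carrier_induct)
     (simp_all add: fa_subst_linear fa_subst_word[OF nonempty] fa_mul_linear fa_mul_word)

lemma fa_subst_mul:
  assumes "f \<in> fa_carrier" "g \<in> fa_carrier"
  shows "fa_subst \<sigma> (fa_mul f g) = fa_mul (fa_subst \<sigma> f) (fa_subst \<sigma> g)"
  using assms(1)
  by (induction rule: fa_carrier_induct)
     (simp_all add: fa_subst_linear fa_mul_linear fa_subst_mul_word[OF assms(2)])

end

definition subst_admissible :: "(letter \<Rightarrow> letter list) \<Rightarrow> complex \<Rightarrow> complex \<Rightarrow> bool" where
  "subst_admissible \<sigma> c d \<longleftrightarrow>
     (\<forall>x. \<sigma> x \<noteq> []) \<and> (\<forall>r \<in> daha_rels c. fa_subst \<sigma> r \<in> daha_ideal d)"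

definition daha_subst :: "(letter \<Rightarrow> letter list) \<Rightarrow> complex \<Rightarrow> fa set \<Rightarrow> fa set" where
  "daha_subst \<sigma> d X = daha_cls d (fa_subst \<sigma> (SOME f. f \<in> X))"

context
  fixes \<sigma> :: "letter \<Rightarrow> letter list" and c d :: complex
  assumes admissible: "subst_admissible \<sigma> c d"
begin

lemma subst_nonempty: "\<sigma> x \<noteq> []"
  using admissible by (simp add: subst_admissible_def)

lemma fa_subst_daha_ideal: "f \<in> daha_ideal c \<Longrightarrow> fa_subst \<sigma> f \<in> daha_ideal d"
proof -
  let ?J = "{f \<in> fa_carrier. fa_subst \<sigma> f \<in> daha_ideal d}"
  note carrier = fa_subst_carrier[OF subst_nonempty] fa_carrier_closed
  have "fa_ideal ?J"
    unfolding fa_ideal_def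
  proof (intro conjI ballI allI impI)
    show "?J \<subseteq> fa_carrier" "fa_zero \<in> ?J"
      by (auto simp: fa_subst_zero fa_carrier_zero daha_ideal_zero)
  next
    fix f g assume "f \<in> ?J" "g \<in> ?J"
    then show "fa_add f g \<in> ?J" by (simp add: fa_subst_add carrier daha_ideal_add)
  next
    fix a f assume "f \<in> ?J"
    then show "fa_smul a f \<in> ?J" by (simp add: fa_subst_smul carrier daha_ideal_smul)
  next
    fix f g assume "f \<in> ?J" "g \<in> fa_carrier"
    then show "fa_mul f g \<in> ?J" "fa_mul g f \<in> ?J"
      by (simp_all add: fa_subst_mul[OF subst_nonempty] carrier daha_ideal_mul_left daha_ideal_mul_right)
  qed
  moreover have "daha_rels c \<subseteq> ?J"
    using admissible daha_rels_carrier by (auto simp: subst_admissible_def)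
  ultimately show "f \<in> daha_ideal c \<Longrightarrow> fa_subst \<sigma> f \<in> daha_ideal d"
    using daha_ideal_least by blast
qed

lemma daha_eqv_fa_subst: "daha_eqv c f g \<Longrightarrow> daha_eqv d (fa_subst \<sigma> f) (fa_subst \<sigma> g)"
  unfolding daha_eqv_def by (metis fa_subst_daha_ideal fa_subst_sub)

lemma daha_subst_cls:
  assumes "f \<in> fa_carrier"
  shows "daha_subst \<sigma> d (daha_cls c f) = daha_cls d (fa_subst \<sigma> f)"
proof -
  let ?g = "SOME g. g \<in> daha_cls c f"
  have g: "?g \<in> fa_carrier" "daha_eqv c f ?g" using daha_cls_some[OF assms] by blast+
  show ?thesis
    unfolding daha_subst_def
    by (rule daha_cls_eq[THEN iffD2, OF fa_subst_carrier[OF subst_nonempty g(1)]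
          fa_subst_carrier[OF subst_nonempty assms] daha_eqv_sym[OF daha_eqv_fa_subst[OF g(2)]]])
qed

lemma daha_subst_alg_hom: "daha_alg_hom c d (daha_subst \<sigma> d)"
  unfolding daha_alg_hom_def
proof (intro conjI ballI allI)
  note carrier = fa_subst_carrier[OF subst_nonempty] fa_carrier_closed
  fix X assume "X \<in> daha c"
  then obtain f where f: "f \<in> fa_carrier" "X = daha_cls c f" unfolding daha_def by blast
  show "daha_subst \<sigma> d X \<in> daha d"
    using f by (simp add: daha_subst_cls carrier daha_def)
  fix a
  show "daha_subst \<sigma> d (daha_smul c a X) = daha_smul d a (daha_subst \<sigma> d X)"
    using f by (simp add: daha_subst_cls daha_smul_cls carrier fa_subst_smul)
next
  note carrier = fa_subst_carrier[OF subst_nonempty] fa_carrier_closed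
  fix X Y assume "X \<in> daha c" "Y \<in> daha c"
  then obtain f g where f: "f \<in> fa_carrier" "X = daha_cls c f" and g: "g \<in> fa_carrier" "Y = daha_cls c g"
    unfolding daha_def by blast
  show "daha_subst \<sigma> d (daha_add c X Y) = daha_add d (daha_subst \<sigma> d X) (daha_subst \<sigma> d Y)"
    using f g by (simp add: daha_subst_cls daha_add_cls carrier fa_subst_add)
  show "daha_subst \<sigma> d (daha_mul c X Y) = daha_mul d (daha_subst \<sigma> d X) (daha_subst \<sigma> d Y)"
    using f g by (simp add: daha_subst_cls daha_mul_cls carrier fa_subst_mul[OF subst_nonempty])
next
  show "daha_subst \<sigma> d (daha_one c) = daha_one d"
    by (simp add: daha_one_def fa_one_def daha_subst_cls fa_carrier_word fa_subst_word[OF subst_nonempty])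
qed

end

lemma daha_subst_inverse:
  assumes "subst_admissible \<sigma> c d" "subst_admissible \<tau> d c"
    and letters: "\<And>x. daha_eqv c (fa_word (word_subst \<tau> (\<sigma> x))) (fa_word [x])"
    and "X \<in> daha c"
  shows "daha_subst \<tau> c (daha_subst \<sigma> d X) = X"
proof -
  have \<sigma>: "\<sigma> x \<noteq> []" and \<tau>: "\<tau> x \<noteq> []" for x
    using assms(1,2) by (simp_all add: subst_admissible_def)
  have words: "daha_eqv c (fa_word (word_subst \<tau> (word_subst \<sigma> w))) (fa_word w)" for w
  proof (induction w)
    case (Cons x w)
    from daha_eqv_mul[OF letters Cons.IH] show ?case
      by (simp add: fa_mul_word fa_carrier_word)
  qed (simp add: daha_eqv_refl fa_carrier_word)
  obtain f where f: "f \<in> fa_carrier" "X = daha_cls c f"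
    using assms(4) unfolding daha_def by blast
  have "daha_eqv c (fa_subst \<tau> (fa_subst \<sigma> f)) f"
    using f(1)
    by (induction rule: fa_carrier_induct)
       (simp_all add: fa_subst_linear fa_subst_word[OF \<sigma>] fa_subst_word[OF \<tau>]
         daha_eqv_add daha_eqv_smul words daha_eqv_refl fa_carrier_zero)
  then show ?thesis
    using f daha_cls_eq daha_subst_cls[OF assms(1)] daha_subst_cls[OF assms(2)]
      fa_subst_carrier[OF \<sigma>] fa_subst_carrier[OF \<tau>]
    by simp
qed


section \<open>The substitution of eta_1\<close>

fun eta1_letter :: "letter \<Rightarrow> letter list" where
  "eta1_letter (Gen I0 True) = [ti I0]"
| "eta1_letter (Gen I0 False) = [t I0]"
| "eta1_letter (Gen I1 True) = [t I0, ti I1, ti I0]"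
| "eta1_letter (Gen I1 False) = [t I0, t I1, ti I0]"
| "eta1_letter (Gen I2 True) = [ti I3, ti I2, t I3]"
| "eta1_letter (Gen I2 False) = [ti I3, t I2, t I3]"
| "eta1_letter (Gen I3 True) = [ti I3]"
| "eta1_letter (Gen I3 False) = [t I3]"

lemma eta1_letter_nonempty: "eta1_letter x \<noteq> []"
  by (cases x rule: eta1_letter.cases) simp_all

lemma eta1_letter_inv: "eta1_letter (letter_inv x) = word_inv (eta1_letter x)"
  by (cases x rule: eta1_letter.cases) simp_all

lemma eta1_letter_conj:
  "\<exists>a m. eta1_letter (t n) = a @ [ti m] @ word_inv a \<and> eta1_letter (ti n) = a @ [t m] @ word_inv a"
proof (cases n)
  case I0 then show ?thesis by (intro exI[of _ "[]"] exI[of _ I0]) simp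
next
  case I1 then show ?thesis by (intro exI[of _ "[t I0]"] exI[of _ I1]) simp
next
  case I2 then show ?thesis by (intro exI[of _ "[ti I3]"] exI[of _ I2]) simp
next
  case I3 then show ?thesis by (intro exI[of _ "[]"] exI[of _ I3]) simp
qed

lemma eta1_subst_admissible:
  assumes "c * d = 1"
  shows "subst_admissible eta1_letter c d"
  unfolding subst_admissible_def
proof (intro conjI allI ballI)
  note subst = fa_subst_linear fa_subst_word[OF eta1_letter_nonempty]
    fa_subst_mul[OF eta1_letter_nonempty] fa_carrier_closed fa_one_def
  fix r assume "r \<in> daha_rels c"
  then show "fa_subst eta1_letter r \<in> daha_ideal d"
  proof (cases rule: daha_rels_cases)
    case (cancel x)
    then show ?thesis
      using daha_eqv_word_mul_inv[of d "eta1_letter x"]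
      by (simp add: subst eta1_letter_inv daha_eqv_def)
  next
    case (central n x)
    obtain a m where a: "eta1_letter (t n) = a @ [ti m] @ word_inv a"
      "eta1_letter (ti n) = a @ [t m] @ word_inv a"
      using eta1_letter_conj by blast
    have "fa_subst eta1_letter (fa_add (fa_word [t n]) (fa_word [ti n]))
        = fa_mul (fa_word a) (fa_mul (fa_add (fa_word [t m]) (fa_word [ti m])) (fa_word (word_inv a)))"
      by (simp add: subst a fa_mul_linear fa_mul_word fa_add_commute)
    then have "daha_central d (fa_subst eta1_letter (fa_add (fa_word [t n]) (fa_word [ti n])))"
      by (simp add: daha_central_conj daha_central_gen_sum)
    then show ?thesis
      by (simp add: central subst daha_central_def daha_eqv_def)
  next
    case prod
    have "daha_eqv d (fa_word [t I2, t I3, t I0, t I1]) (fa_smul d (fa_word []))"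
      using daha_eqv_word_rotate[of d "[t I0, t I1]" "[t I2, t I3]"] daha_eqv_gen_prod by simp
    from daha_eqv_word_inv_scalar[OF this, of c]
    have inverse: "daha_eqv d (fa_word [ti I1, ti I0, ti I3, ti I2]) (fa_smul c (fa_word []))"
      using assms by (simp add: mult.commute)
    have cancel: "daha_eqv d (fa_word [ti I0, t I0, ti I1, ti I0, ti I3, ti I2, t I3, ti I3])
                              (fa_word [ti I1, ti I0, ti I3, ti I2])"
      using daha_eqv_trans[OF
          daha_eqv_delete_letter_pair[where a = "[]" and x = "ti I0" and b = "[ti I1, ti I0, ti I3, ti I2, t I3, ti I3]", simplified]
          daha_eqv_delete_letter_pair[where a = "[ti I1, ti I0, ti I3, ti I2]" and x = "t I3" and b = "[]", simplified]]
      by simp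
    from daha_eqv_trans[OF cancel inverse] show ?thesis
      by (simp add: prod subst daha_eqv_def)
  qed
qed (fact eta1_letter_nonempty)

lemma eta1_letter_involutive:
  "daha_eqv c (fa_word (word_subst eta1_letter (eta1_letter x))) (fa_word [x])"
proof (cases x rule: eta1_letter.cases)
  case 3 then show ?thesis using daha_eqv_unconj[of c "[t I0]" "[t I1]"] by simp
next
  case 4 then show ?thesis using daha_eqv_unconj[of c "[t I0]" "[ti I1]"] by simp
next
  case 5 then show ?thesis using daha_eqv_unconj[of c "[ti I3]" "[t I2]"] by simp
next
  case 6 then show ?thesis using daha_eqv_unconj[of c "[ti I3]" "[ti I2]"] by simp
qed (simp_all add: daha_eqv_refl fa_carrier_word)

lemma daha_subst_eta1_gens:
  "c * d = 1 \<Longrightarrow> eta1_gens c d (daha_subst eta1_letter d)"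
  unfolding eta1_gens_def daha_gen_def
  by (simp add: daha_subst_cls[OF eta1_subst_admissible] fa_carrier_word
      fa_subst_word[OF eta1_letter_nonempty])

theorem lemma10p1:
  fixes q qh :: complex
  assumes "q \<noteq> 0" and "\<forall>n::nat. n > 0 \<longrightarrow> q ^ n \<noteq> 1" and "qh ^ 2 = q"
  shows "\<exists>\<eta> \<eta>'.
           daha_alg_iso qh (inverse qh) \<eta> \<and> eta1_gens qh (inverse qh) \<eta>
         \<and> daha_alg_hom (inverse qh) qh \<eta>' \<and> eta1_gens (inverse qh) qh \<eta>'
         \<and> (\<forall>X\<in>daha qh. \<eta>' (\<eta> X) = X)
         \<and> (\<forall>Y\<in>daha (inverse qh). \<eta> (\<eta>' Y) = Y)"
proof -
  let ?\<eta> = "daha_subst eta1_letter (inverse qh)" and ?\<eta>' = "daha_subst eta1_letter qh"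
  have "qh \<noteq> 0" using assms(1,3) by auto
  then have inv: "qh * inverse qh = 1" "inverse qh * qh = 1" by simp_all
  note adm = eta1_subst_admissible[OF inv(1)] eta1_subst_admissible[OF inv(2)]
  have hom: "daha_alg_hom qh (inverse qh) ?\<eta>" "daha_alg_hom (inverse qh) qh ?\<eta>'"
    by (fact daha_subst_alg_hom[OF adm(1)] daha_subst_alg_hom[OF adm(2)])+
  have left: "\<forall>X\<in>daha qh. ?\<eta>' (?\<eta> X) = X"
    using daha_subst_inverse[OF adm eta1_letter_involutive] by blast
  have right: "\<forall>Y\<in>daha (inverse qh). ?\<eta> (?\<eta>' Y) = Y"
    using daha_subst_inverse[OF adm(2,1) eta1_letter_involutive] by blast
  have "bij_betw ?\<eta> (daha qh) (daha (inverse qh))"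
    using hom by (intro bij_betw_byWitness[OF left right]) (auto simp: daha_alg_hom_def)
  then show ?thesis
    using hom left right daha_subst_eta1_gens[OF inv(1)] daha_subst_eta1_gens[OF inv(2)]
    unfolding daha_alg_iso_def by blast
qed

end
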